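(* Let $R$ be a commutative Noetherian ring, $M$ a faithful primeful $R$-module having at least one prime submodule, $X=\mathrm{Spec}(M)$, $N$ an $R$-module, $K\le M$, and $U=X\setminus V(K)$. Then $\Gamma_{(K:M)}(N)=\ker(\epsilon_N^U)$; in particular $\ker(\epsilon_N^U)$ is $(K:M)$-torsion.
   Context: For a submodule $L$ of an $R$-module $M$, $(L:M)=\{r\in R\mid rM\subseteq L\}$. A submodule $P$ of $M$ is prime if $P\neq M$ and whenever $rm\in P$ ($r\in R$, $m\in M$) then $r\in (P:M)$ or $m\in P$. $\mathrm{Spec}(M)$ is the set of prime submodules. $M$ is faithful if $\mathrm{Ann}_R(M)=0$; primeful if $M=0$ or $\mathrm{Spec}(M)\to\mathrm{Spec}(R/\mathrm{Ann}(M))$, $P\mapsto(P:M)/\mathrm{Ann}(M)$, is surjective. For $L\le M$, $V(L)=\{P\in X\mid (P:M)\supseteq (L:M)\}$; these are the closed sets of the Zariski topology. For open $U\subseteq X$, $\mathrm{Supp}(U)=\{(P:M)\mid P\in U\}$. $\mathcal{A}(N,M)(U)$ is the $R$-module of families $(\gamma_{\mathfrak p})_{\mathfrak p\in\mathrm{Supp}(U)}\in\prod_{\mathfrak p\in\mathrm{Supp}(U)}N_{\mathfrak p}$ such that for each $Q\in U$ there exist an open neighbourhood $W\subseteq U$ of $Q$ and $s\in R$, $m\in N$ with $s\notin (P:M)$ and $\gamma_{(P:M)}=m/s$ for every $P\in W$. $\epsilon_N^U:N\to\mathcal{A}(N,M)(U)$ is $n\mapsto(n/1)_{\mathfrak p\in\mathrm{Supp}(U)}$.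 For an ideal $I$, $\Gamma_I(H)=\bigcup_{n\ge1}(0:_H I^n)$, and $H$ is $I$-torsion if $H=\Gamma_I(H)$. *)

theory Defs
  imports Complex_Main
begin

definition is_ideal :: "'r::comm_ring_1 set \<Rightarrow> bool" where
  "is_ideal I \<longleftrightarrow> 0 \<in> I \<and> (\<forall>x\<in>I. \<forall>y\<in>I. x + y \<in> I) \<and> (\<forall>r. \<forall>x\<in>I. r * x \<in> I)"

definition prime_ideal :: "'r::comm_ring_1 set \<Rightarrow> bool" where
  "prime_ideal p \<longleftrightarrow> is_ideal p \<and> p \<noteq> UNIV \<and> (\<forall>a b. a * b \<in> p \<longrightarrow> a \<in> p \<or> b \<in> p)"

definition ideal_gen :: "'r::comm_ring_1 set \<Rightarrow> 'r set" where
  "ideal_gen F = {(\<Sum>i<k. c i * x i) | (k::nat) c x. \<forall>i<k. x i \<in> F}"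

fun ideal_pow :: "'r::comm_ring_1 set \<Rightarrow> nat \<Rightarrow> 'r set" where
  "ideal_pow I 0 = UNIV"
| "ideal_pow I (Suc n) = ideal_gen {a * b | a b. a \<in> I \<and> b \<in> ideal_pow I n}"

definition noetherian_ring :: "'r::comm_ring_1 itself \<Rightarrow> bool" where
  "noetherian_ring _ \<longleftrightarrow> (\<forall>I::'r set. is_ideal I \<longrightarrow> (\<exists>F. finite F \<and> I = ideal_gen F))"

section \<open>Modules: an R-module is a type 'm with a scalar action s satisfying module s\<close>

definition colon :: "('r::comm_ring_1 \<Rightarrow> 'm::ab_group_add \<Rightarrow> 'm) \<Rightarrow> 'm set \<Rightarrow> 'r set" where
  "colon s L = {r. \<forall>m. s r m \<in> L}"

definition ann :: "('r::comm_ring_1 \<Rightarrow> 'm::ab_group_add \<Rightarrow> 'm) \<Rightarrow> 'r set" where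
  "ann s = {r. \<forall>m. s r m = 0}"

definition faithful :: "('r::comm_ring_1 \<Rightarrow> 'm::ab_group_add \<Rightarrow> 'm) \<Rightarrow> bool" where
  "faithful s \<longleftrightarrow> ann s = {0}"

definition prime_submodule :: "('r::comm_ring_1 \<Rightarrow> 'm::ab_group_add \<Rightarrow> 'm) \<Rightarrow> 'm set \<Rightarrow> bool" where
  "prime_submodule s P \<longleftrightarrow> module.subspace s P \<and> P \<noteq> UNIV \<and>
     (\<forall>r m. s r m \<in> P \<longrightarrow> r \<in> colon s P \<or> m \<in> P)"

definition Spec_mod :: "('r::comm_ring_1 \<Rightarrow> 'm::ab_group_add \<Rightarrow> 'm) \<Rightarrow> 'm set set" where
  "Spec_mod s = {P. prime_submodule s P}"

text \<open>Primeful: M = 0, or the map P |-> (P:M)/Ann(M) from Spec(M) to Spec(R/Ann(M)) is onto;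
  via the correspondence Spec(R/Ann M) = primes of R containing Ann M.\<close>
definition primeful :: "('r::comm_ring_1 \<Rightarrow> 'm::ab_group_add \<Rightarrow> 'm) \<Rightarrow> bool" where
  "primeful s \<longleftrightarrow> (UNIV :: 'm set) = {0} \<or>
     (\<forall>p. prime_ideal p \<and> ann s \<subseteq> p \<longrightarrow> (\<exists>P\<in>Spec_mod s. colon s P = p))"

definition V_mod :: "('r::comm_ring_1 \<Rightarrow> 'm::ab_group_add \<Rightarrow> 'm) \<Rightarrow> 'm set \<Rightarrow> 'm set set" where
  "V_mod s L = {P \<in> Spec_mod s. colon s L \<subseteq> colon s P}"

definition zariski_open :: "('r::comm_ring_1 \<Rightarrow> 'm::ab_group_add \<Rightarrow> 'm) \<Rightarrow> 'm set set \<Rightarrow> bool" where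
  "zariski_open s W \<longleftrightarrow> (\<exists>L. module.subspace s L \<and> W = Spec_mod s - V_mod s L)"

definition Supp :: "('r::comm_ring_1 \<Rightarrow> 'm::ab_group_add \<Rightarrow> 'm) \<Rightarrow> 'm set set \<Rightarrow> 'r set set" where
  "Supp s U = (\<lambda>P. colon s P) ` U"

text \<open>The fraction m/s in N_p, represented as the equivalence class of (m,s).\<close>
definition frac :: "('r::comm_ring_1 \<Rightarrow> 'n::ab_group_add \<Rightarrow> 'n) \<Rightarrow> 'r set \<Rightarrow> 'n \<Rightarrow> 'r \<Rightarrow> ('n \<times> 'r) set" where
  "frac t p m u = {(m', u'). u' \<notin> p \<and> (\<exists>v. v \<notin> p \<and> t v (t u' m - t u m') = 0)}"

definition localization :: "('r::comm_ring_1 \<Rightarrow> 'n::ab_group_add \<Rightarrow> 'n) \<Rightarrow> 'r set \<Rightarrow> ('n \<times> 'r) set set" where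
  "localization t p = {frac t p m u | m u. u \<notin> p}"

text \<open>Sections A(N,M)(U): families indexed by Supp(U) (extensional, undefined outside).\<close>
definition sections ::
  "('r::comm_ring_1 \<Rightarrow> 'm::ab_group_add \<Rightarrow> 'm) \<Rightarrow> ('r \<Rightarrow> 'n::ab_group_add \<Rightarrow> 'n) \<Rightarrow> 'm set set
     \<Rightarrow> ('r set \<Rightarrow> ('n \<times> 'r) set) set" where
  "sections s t U = {\<gamma>. (\<forall>p. p \<notin> Supp s U \<longrightarrow> \<gamma> p = undefined) \<and>
      (\<forall>p\<in>Supp s U. \<gamma> p \<in> localization t p) \<and>
      (\<forall>Q\<in>U. \<exists>W u m. zariski_open s W \<and> Q \<in> W \<and> W \<subseteq> U \<and>
          (\<forall>P\<in>W. u \<notin> colon s P \<and> \<gamma> (colon s P) = frac t (colon s P) m u))}"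

definition eps ::
  "('r::comm_ring_1 \<Rightarrow> 'm::ab_group_add \<Rightarrow> 'm) \<Rightarrow> ('r \<Rightarrow> 'n::ab_group_add \<Rightarrow> 'n) \<Rightarrow> 'm set set
     \<Rightarrow> 'n \<Rightarrow> ('r set \<Rightarrow> ('n \<times> 'r) set)" where
  "eps s t U n = (\<lambda>p. if p \<in> Supp s U then frac t p n 1 else undefined)"

definition ker_eps ::
  "('r::comm_ring_1 \<Rightarrow> 'm::ab_group_add \<Rightarrow> 'm) \<Rightarrow> ('r \<Rightarrow> 'n::ab_group_add \<Rightarrow> 'n) \<Rightarrow> 'm set set \<Rightarrow> 'n set" where
  "ker_eps s t U = {n. eps s t U n = eps s t U 0}"

definition Gamma :: "('r::comm_ring_1 \<Rightarrow> 'n::ab_group_add \<Rightarrow> 'n) \<Rightarrow> 'r set \<Rightarrow> 'n set \<Rightarrow> 'n set" where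
  "Gamma t I H = {h \<in> H. \<exists>k\<ge>1. \<forall>r\<in>ideal_pow I k. t r h = 0}"

definition torsion :: "('r::comm_ring_1 \<Rightarrow> 'n::ab_group_add \<Rightarrow> 'n) \<Rightarrow> 'r set \<Rightarrow> 'n set \<Rightarrow> bool" where
  "torsion t I H \<longleftrightarrow> H = Gamma t I H"

end

theory Submission
  imports Defs
begin

text \<open>Write I = (K:M). Since M is faithful and primeful, Supp(X - V(K)) consists of all prime
  ideals p with I \<not>\<subseteq> p, and n/1 vanishes in N_p iff Ann(n) \<not>\<subseteq> p. Hence n lies in the
  kernel of \<epsilon> iff every prime ideal containing Ann(n) contains I, i.e. (Krull) iff I lies in the
  radical of Ann(n). As R is Noetherian, I is finitely generated, so this happens iff
  I^k \<subseteq> Ann(n) for some k, which is membership in \<Gamma>_I(N).\<close>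

lemma ideal_add: "is_ideal J \<Longrightarrow> x \<in> J \<Longrightarrow> y \<in> J \<Longrightarrow> x + y \<in> J"
  by (simp add: is_ideal_def)

lemma ideal_mult_left: "is_ideal J \<Longrightarrow> x \<in> J \<Longrightarrow> r * x \<in> J"
  by (simp add: is_ideal_def)

lemma ideal_mult_right: "is_ideal J \<Longrightarrow> x \<in> J \<Longrightarrow> x * r \<in> J"
  by (simp add: is_ideal_def mult.commute)

lemma ideal_sum: "is_ideal J \<Longrightarrow> (\<And>i. i \<in> A \<Longrightarrow> f i \<in> J) \<Longrightarrow> (\<Sum>i\<in>A. f i) \<in> J"
  by (induction A rule: infinite_finite_induct) (auto simp: is_ideal_def)

lemma ideal_eq_UNIV_if_one: "is_ideal J \<Longrightarrow> 1 \<in> J \<Longrightarrow> J = UNIV"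
  using ideal_mult_left[of J 1] by auto

lemma prime_ideal_power_notin: "prime_ideal p \<Longrightarrow> a \<notin> p \<Longrightarrow> a ^ k \<notin> p"
proof (induction k)
  case 0
  then show ?case using ideal_eq_UNIV_if_one[of p] by (auto simp: prime_ideal_def)
next
  case (Suc k)
  then show ?case by (auto simp: prime_ideal_def)
qed

lemma is_ideal_add_multiples:
  assumes P: "is_ideal P"
  shows "is_ideal {p + r * x | p r. p \<in> P}"
  unfolding is_ideal_def
proof (intro conjI ballI allI)
  have "0 = 0 + 0 * x" "0 \<in> P"
    using P by (auto simp: is_ideal_def)
  then show "0 \<in> {p + r * x | p r. p \<in> P}" by blast
  show "u + v \<in> {p + r * x | p r. p \<in> P}"
    if "u \<in> {p + r * x | p r. p \<in> P}" and "v \<in> {p + r * x | p r. p \<in> P}" for u v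
  proof -
    from that obtain p1 r1 p2 r2 where "u = p1 + r1 * x" "v = p2 + r2 * x" "p1 \<in> P" "p2 \<in> P"
      by blast
    then have "u + v = (p1 + p2) + (r1 + r2) * x" "p1 + p2 \<in> P"
      using ideal_add[OF P] by (auto simp: algebra_simps)
    then show ?thesis by blast
  qed
  show "s * u \<in> {p + r * x | p r. p \<in> P}" if "u \<in> {p + r * x | p r. p \<in> P}" for s u
  proof -
    from that obtain p1 r1 where "u = p1 + r1 * x" "p1 \<in> P"
      by blast
    then have "s * u = s * p1 + (s * r1) * x" "s * p1 \<in> P"
      using ideal_mult_left[OF P] by (auto simp: algebra_simps)
    then show ?thesis by blast
  qed
qed

lemma ideal_gen_memI: "(\<forall>i<(k::nat). x i \<in> F) \<Longrightarrow> (\<Sum>i<k. c i * x i) \<in> ideal_gen F"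
  unfolding ideal_gen_def by blast

lemma ideal_gen_memE:
  assumes "y \<in> ideal_gen F"
  obtains k :: nat and c x where "y = (\<Sum>i<k. c i * x i)" "\<forall>i<k. x i \<in> F"
  using assms unfolding ideal_gen_def by blast

lemma ideal_gen_add:
  assumes "y \<in> ideal_gen F" and "z \<in> ideal_gen F"
  shows "y + z \<in> ideal_gen F"
proof -
  obtain k :: nat and c x where y: "y = (\<Sum>i<k. c i * x i)" and x: "\<forall>i<k. x i \<in> F"
    using assms(1) by (blast elim: ideal_gen_memE)
  obtain l :: nat and d w where z: "z = (\<Sum>i<l. d i * w i)" and w: "\<forall>i<l. w i \<in> F"
    using assms(2) by (blast elim: ideal_gen_memE)
  define c' where "c' i = (if i < k then c i else d (i - k))" for i
  define x' where "x' i = (if i < k then x i else w (i - k))" for i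
  have "(\<Sum>i<k + l. c' i * x' i) = (\<Sum>i<k. c' i * x' i) + (\<Sum>i\<in>{k..<k + l}. c' i * x' i)"
    by (simp add: lessThan_atLeast0 sum.atLeastLessThan_concat)
  also have "\<dots> = y + z"
    using sum.shift_bounds_nat_ivl[of "\<lambda>i. c' i * x' i" 0 k l]
    by (simp add: y z c'_def x'_def add.commute atLeast0LessThan)
  finally have "y + z = (\<Sum>i<k + l. c' i * x' i)" ..
  moreover have "\<forall>i<k + l. x' i \<in> F"
    using x w by (auto simp: x'_def)
  ultimately show ?thesis
    by (simp add: ideal_gen_memI)
qed

lemma is_ideal_ideal_gen: "is_ideal (ideal_gen F)"
  unfolding is_ideal_def
proof (intro conjI ballI allI)
  show "0 \<in> ideal_gen F"
    using ideal_gen_memI[of 0 _ F] by simp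
  show "r * y \<in> ideal_gen F" if y: "y \<in> ideal_gen F" for r y
  proof -
    obtain k :: nat and c x where "y = (\<Sum>i<k. c i * x i)" "\<forall>i<k. x i \<in> F"
      using y by (blast elim: ideal_gen_memE)
    then show ?thesis
      using ideal_gen_memI[of k x F "\<lambda>i. r * c i"] by (simp add: sum_distrib_left mult.assoc)
  qed
qed (rule ideal_gen_add)

lemma ideal_gen_superset: "F \<subseteq> ideal_gen F"
proof
  fix g assume "g \<in> F"
  then have "(\<Sum>i<(1::nat). 1 * g) \<in> ideal_gen F"
    by (intro ideal_gen_memI) auto
  then show "g \<in> ideal_gen F" by simp
qed

lemma ideal_gen_minimal: "is_ideal J \<Longrightarrow> F \<subseteq> J \<Longrightarrow> ideal_gen F \<subseteq> J"
  by (auto elim!: ideal_gen_memE intro!: ideal_sum ideal_mult_left)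

lemma ideal_gen_empty: "ideal_gen {} = {0}"
proof -
  have "is_ideal {0}" by (simp add: is_ideal_def)
  then show ?thesis
    using ideal_gen_minimal[of "{0}" "{}"] is_ideal_ideal_gen[of "{}"] by (auto simp: is_ideal_def)
qed

lemma ideal_gen_insert: "ideal_gen (insert f F) \<subseteq> {y + c * f | y c. y \<in> ideal_gen F}"
proof (rule ideal_gen_minimal)
  show "is_ideal {y + c * f | y c. y \<in> ideal_gen F}"
    by (rule is_ideal_add_multiples[OF is_ideal_ideal_gen])
  have "f = 0 + 1 * f" "0 \<in> ideal_gen F"
    using is_ideal_ideal_gen by (auto simp: is_ideal_def)
  moreover have "g = g + 0 * f" for g by simp
  ultimately show "insert f F \<subseteq> {y + c * f | y c. y \<in> ideal_gen F}"
    using ideal_gen_superset by blast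
qed

lemma power_in_ideal_pow: "a \<in> I \<Longrightarrow> a ^ k \<in> ideal_pow I k"
  by (induction k) (auto intro!: subsetD[OF ideal_gen_superset])

lemma is_ideal_Union_chain:
  assumes "C \<in> chains {Q. is_ideal Q}" and "C \<noteq> {}"
  shows "is_ideal (\<Union>C)"
proof -
  have ideals: "\<And>Q. Q \<in> C \<Longrightarrow> is_ideal Q"
    and chain: "\<And>Q Q'. Q \<in> C \<Longrightarrow> Q' \<in> C \<Longrightarrow> Q \<subseteq> Q' \<or> Q' \<subseteq> Q"
    using assms(1) by (auto simp: chains_def chain_subset_def)
  have "x + y \<in> \<Union>C" if "x \<in> \<Union>C" "y \<in> \<Union>C" for x y
  proof -
    from that obtain Q Q' where "Q \<in> C" "Q' \<in> C" "x \<in> Q" "y \<in> Q'" by blast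
    with chain[of Q Q'] have "x + y \<in> Q \<or> x + y \<in> Q'"
      using ideals ideal_add by blast
    with \<open>Q \<in> C\<close> \<open>Q' \<in> C\<close> show ?thesis by blast
  qed
  moreover have "r * x \<in> \<Union>C" if "x \<in> \<Union>C" for r x
  proof -
    from that obtain Q where "Q \<in> C" "x \<in> Q" by blast
    then have "r * x \<in> Q"
      using ideals ideal_mult_left by blast
    with \<open>Q \<in> C\<close> show ?thesis by blast
  qed
  moreover have "0 \<in> \<Union>C"
    using assms(2) ideals by (auto simp: is_ideal_def)
  ultimately show ?thesis
    unfolding is_ideal_def by blast
qed

text \<open>Krull: an ideal maximal (by Zorn) among those containing J and no power of a is prime.\<close>
lemma prime_ideal_avoiding_powers:
  assumes J: "is_ideal J" and no_power: "\<And>k. a ^ k \<notin> J"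
  obtains p where "prime_ideal p" "J \<subseteq> p" "a \<notin> p"
proof -
  define A where "A = {Q. is_ideal Q \<and> J \<subseteq> Q \<and> (\<forall>k. a ^ k \<notin> Q)}"
  have "J \<in> A"
    using J no_power by (simp add: A_def)
  have "\<forall>C\<in>chains A. \<exists>U\<in>A. \<forall>Q\<in>C. Q \<subseteq> U"
  proof
    fix C assume C: "C \<in> chains A"
    show "\<exists>U\<in>A. \<forall>Q\<in>C. Q \<subseteq> U"
    proof (cases "C = {}")
      case True
      with \<open>J \<in> A\<close> show ?thesis by blast
    next
      case False
      have "C \<subseteq> A"
        using C by (simp add: chains_def)
      have "C \<in> chains {Q. is_ideal Q}"
        using C unfolding chains_def A_def by blast
      then have "is_ideal (\<Union>C)"
        using False by (rule is_ideal_Union_chain)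
      moreover have "J \<subseteq> \<Union>C" and "\<And>k. a ^ k \<notin> \<Union>C"
        using False \<open>C \<subseteq> A\<close> unfolding A_def by blast+
      ultimately have "\<Union>C \<in> A"
        unfolding A_def by blast
      then show ?thesis by blast
    qed
  qed
  then obtain P where "P \<in> A" and maximal: "\<forall>Q\<in>A. P \<subseteq> Q \<longrightarrow> Q = P"
    by (blast dest: Zorn_Lemma2)
  then have P: "is_ideal P" "J \<subseteq> P" and P_no_power: "\<And>k. a ^ k \<notin> P"
    unfolding A_def by blast+
  have power_in_extension: "\<exists>k p r. a ^ k = p + r * x \<and> p \<in> P" if "x \<notin> P" for x
  proof (rule ccontr)
    assume "\<not> ?thesis"
    moreover have "P \<subseteq> {p + r * x | p r. p \<in> P}"
    proof
      fix p assume "p \<in> P"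
      then show "p \<in> {p + r * x | p r. p \<in> P}"
        by (intro CollectI exI[of _ p] exI[of _ 0]) simp
    qed
    ultimately have "{p + r * x | p r. p \<in> P} \<in> A"
      using is_ideal_add_multiples[OF P(1)] P(2) unfolding A_def by blast
    moreover note \<open>P \<subseteq> {p + r * x | p r. p \<in> P}\<close>
    moreover have "x \<in> {p + r * x | p r. p \<in> P}"
      using P(1) by (intro CollectI exI[of _ 0] exI[of _ 1]) (simp add: is_ideal_def)
    ultimately show False
      using maximal that by blast
  qed
  have "prime_ideal P"
    unfolding prime_ideal_def
  proof (intro conjI allI impI)
    show "P \<noteq> UNIV"
      using P_no_power by blast
    show "x \<in> P \<or> y \<in> P" if "x * y \<in> P" for x y
    proof (rule ccontr)
      assume "\<not> (x \<in> P \<or> y \<in> P)"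
      then obtain i p1 r1 j p2 r2 where
        1: "a ^ i = p1 + r1 * x" "p1 \<in> P" and 2: "a ^ j = p2 + r2 * y" "p2 \<in> P"
        using power_in_extension by meson
      have "a ^ (i + j) = p1 * (p2 + r2 * y) + (r1 * x * p2 + (r1 * r2) * (x * y))"
        by (simp add: power_add 1 2 algebra_simps)
      also have "\<dots> \<in> P"
        using ideal_mult_right[OF P(1) 1(2)] ideal_mult_left[OF P(1) 2(2)]
          ideal_mult_left[OF P(1) that]
        by (intro ideal_add[OF P(1)])
      finally show False
        using P_no_power by blast
    qed
  qed (rule P(1))
  with P(2) P_no_power[of 1] show ?thesis
    using that by simp
qed

lemma subset_radical_iff_prime_ideals:
  assumes "is_ideal J"
  shows "(\<forall>a\<in>I. \<exists>m. a ^ m \<in> J) \<longleftrightarrow> (\<forall>p. prime_ideal p \<and> J \<subseteq> p \<longrightarrow> I \<subseteq> p)"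
proof
  assume "\<forall>a\<in>I. \<exists>m. a ^ m \<in> J"
  then show "\<forall>p. prime_ideal p \<and> J \<subseteq> p \<longrightarrow> I \<subseteq> p"
    using prime_ideal_power_notin by blast
next
  assume "\<forall>p. prime_ideal p \<and> J \<subseteq> p \<longrightarrow> I \<subseteq> p"
  then show "\<forall>a\<in>I. \<exists>m. a ^ m \<in> J"
    using prime_ideal_avoiding_powers[OF assms] by (metis subsetD)
qed

text \<open>Factors are indexed by a finite set of naturals so that they may repeat. For an ideal A
  this amounts to A^k \<subseteq> J, stated elementwise so that products of sums can be expanded.\<close>
definition products_in :: "'r::comm_ring_1 set \<Rightarrow> nat \<Rightarrow> 'r set \<Rightarrow> bool" where
  "products_in A k J \<longleftrightarrow>
     (\<forall>S a. finite (S::nat set) \<and> k \<le> card S \<and> (\<forall>i\<in>S. a i \<in> A) \<longrightarrow> (\<Prod>i\<in>S. a i) \<in> J)"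

lemma products_in_Suc: "products_in A k J \<Longrightarrow> products_in A (Suc k) J"
  by (simp add: products_in_def)

lemma products_in_ideal_gen_empty: "is_ideal J \<Longrightarrow> products_in (ideal_gen {}) 1 J"
  unfolding products_in_def ideal_gen_empty
  by (auto simp: is_ideal_def power_0_left)

lemma products_in_ideal_gen_insert:
  assumes J: "is_ideal J" and "f ^ m \<in> J" and F: "products_in (ideal_gen F) k J"
  shows "products_in (ideal_gen (insert f F)) (m + k) J"
  unfolding products_in_def
proof (intro allI impI)
  fix S :: "nat set" and a
  assume "finite S \<and> m + k \<le> card S \<and> (\<forall>i\<in>S. a i \<in> ideal_gen (insert f F))"
  then have S: "finite S" "m + k \<le> card S"
    and decomp: "\<forall>i\<in>S. \<exists>y. \<exists>c. a i = y + c * f \<and> y \<in> ideal_gen F"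
    using ideal_gen_insert by blast+
  from bchoice[OF decomp] obtain y
    where "\<forall>i\<in>S. \<exists>c. a i = y i + c * f \<and> y i \<in> ideal_gen F" ..
  from bchoice[OF this] obtain c
    where a: "\<forall>i\<in>S. a i = y i + c i * f \<and> y i \<in> ideal_gen F" ..
  have "(\<Prod>i\<in>S. a i) = (\<Prod>i\<in>S. c i * f + y i)"
    using a by (intro prod.cong) (auto simp: add.commute)
  also have "\<dots> = (\<Sum>X\<in>Pow S. (\<Prod>i\<in>X. c i * f) * (\<Prod>i\<in>S - X. y i))"
    by (rule prod_add[OF S(1)])
  also have "\<dots> \<in> J"
  proof (rule ideal_sum[OF J])
    fix X assume "X \<in> Pow S"
    then have X: "X \<subseteq> S" "finite X"
      using S(1) finite_subset by auto
    show "(\<Prod>i\<in>X. c i * f) * (\<Prod>i\<in>S - X. y i) \<in> J"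
    proof (cases "m \<le> card X")
      case True
      have "(\<Prod>i\<in>X. c i * f) = ((\<Prod>i\<in>X. c i) * f ^ (card X - m)) * f ^ m"
        using True by (simp add: prod.distrib mult.assoc power_add[symmetric])
      then show ?thesis
        using ideal_mult_right[OF J ideal_mult_left[OF J \<open>f ^ m \<in> J\<close>]] by simp
    next
      case False
      then have "k \<le> card (S - X)"
        using X S by (simp add: card_Diff_subset)
      then have "(\<Prod>i\<in>S - X. y i) \<in> J"
        using F a S(1) unfolding products_in_def by blast
      then show ?thesis
        by (rule ideal_mult_left[OF J])
    qed
  qed
  finally show "(\<Prod>i\<in>S. a i) \<in> J" .
qed

lemma products_in_ideal_gen_finite:
  assumes "finite F" and J: "is_ideal J"
  shows "(\<forall>f\<in>F. \<exists>m. f ^ m \<in> J) \<Longrightarrow> \<exists>k. products_in (ideal_gen F) k J"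
  using assms(1)
proof (induction F rule: finite_induct)
  case empty
  then show ?case
    using products_in_ideal_gen_empty[OF J] by blast
next
  case (insert f F)
  then obtain k m where "products_in (ideal_gen F) k J" "f ^ m \<in> J"
    by blast
  then show ?case
    using products_in_ideal_gen_insert[OF J] by blast
qed

text \<open>Induction on n, passing from J to the ideal {b. I * b \<subseteq> J}.\<close>
lemma ideal_pow_subset_if_products_in:
  "is_ideal J \<Longrightarrow> products_in I n J \<Longrightarrow> ideal_pow I n \<subseteq> J"
proof (induction n arbitrary: J)
  case 0
  then have "1 \<in> J"
    using 0(2)[unfolded products_in_def, rule_format, of "{}" "\<lambda>_. 0"] by simp
  then show ?case
    using ideal_eq_UNIV_if_one[OF 0(1)] by simp
next
  case (Suc n)
  define J' where "J' = {b. \<forall>a\<in>I. a * b \<in> J}"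
  have "is_ideal J'"
    using Suc.prems(1) unfolding J'_def is_ideal_def by (auto simp: distrib_left mult.left_commute)
  moreover have "products_in I n J'"
    unfolding products_in_def
  proof (intro allI impI)
    fix S :: "nat set" and a
    assume S: "finite S \<and> n \<le> card S \<and> (\<forall>i\<in>S. a i \<in> I)"
    obtain j where j: "j \<notin> S"
      using S ex_new_if_finite[OF infinite_UNIV_nat] by blast
    have "x * (\<Prod>i\<in>S. a i) \<in> J" if "x \<in> I" for x
    proof -
      have "(\<Prod>i\<in>insert j S. (a(j := x)) i) \<in> J"
        using Suc.prems(2)[unfolded products_in_def, rule_format, of "insert j S" "a(j := x)"] S j that
        by simp
      moreover have "(\<Prod>i\<in>S. (a(j := x)) i) = (\<Prod>i\<in>S. a i)"
        using j by (intro prod.cong) auto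
      then have "(\<Prod>i\<in>insert j S. (a(j := x)) i) = x * (\<Prod>i\<in>S. a i)"
        using S j by simp
      ultimately show ?thesis by simp
    qed
    then show "(\<Prod>i\<in>S. a i) \<in> J'"
      unfolding J'_def by blast
  qed
  ultimately have "ideal_pow I n \<subseteq> J'"
    by (rule Suc.IH)
  then have "{a * b | a b. a \<in> I \<and> b \<in> ideal_pow I n} \<subseteq> J"
    unfolding J'_def by auto
  then show ?case
    using ideal_gen_minimal[OF Suc.prems(1)] by simp
qed

lemma noetherian_ideal_pow_subset_iff:
  assumes "noetherian_ring TYPE('r::comm_ring_1)" and "is_ideal (I::'r set)" and "is_ideal J"
  shows "(\<exists>k\<ge>1. ideal_pow I k \<subseteq> J) \<longleftrightarrow> (\<forall>a\<in>I. \<exists>m. a ^ m \<in> J)"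
proof
  assume "\<exists>k\<ge>1. ideal_pow I k \<subseteq> J"
  then show "\<forall>a\<in>I. \<exists>m. a ^ m \<in> J"
    using power_in_ideal_pow by blast
next
  assume radical: "\<forall>a\<in>I. \<exists>m. a ^ m \<in> J"
  obtain F where "finite F" and I: "I = ideal_gen F"
    using assms(1,2) unfolding noetherian_ring_def by blast
  moreover have "\<forall>f\<in>F. \<exists>m. f ^ m \<in> J"
    using radical ideal_gen_superset I by blast
  ultimately obtain k where "products_in I k J"
    using products_in_ideal_gen_finite[OF _ assms(3)] by blast
  then have "ideal_pow I (Suc k) \<subseteq> J"
    using products_in_Suc ideal_pow_subset_if_products_in assms(3) by blast
  then show "\<exists>k\<ge>1. ideal_pow I k \<subseteq> J"
    by (intro exI[of _ "Suc k"]) simp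
qed

context module
begin

lemma is_ideal_colon: "subspace K \<Longrightarrow> is_ideal (colon scale K)"
  by (auto simp: is_ideal_def colon_def scale_left_distrib subspace_0 subspace_add
      simp flip: scale_scale intro: subspace_scale)

lemma is_ideal_annihilator: "is_ideal {r. r *s n = 0}"
  by (auto simp: is_ideal_def scale_left_distrib simp flip: scale_scale)

lemma prime_ideal_colon:
  assumes "prime_submodule scale P"
  shows "prime_ideal (colon scale P)"
proof -
  have P: "subspace P" "P \<noteq> UNIV"
    and prime: "\<And>r m. r *s m \<in> P \<Longrightarrow> r \<in> colon scale P \<or> m \<in> P"
    using assms by (auto simp: prime_submodule_def)
  have "1 \<notin> colon scale P"
    using P(2) by (auto simp: colon_def)
  moreover have "a \<in> colon scale P \<or> b \<in> colon scale P" if "a * b \<in> colon scale P" for a b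
    using that prime[of a "b *s _"] by (auto simp: colon_def)
  ultimately show ?thesis
    using is_ideal_colon[OF P(1)] by (auto simp: prime_ideal_def)
qed

lemma frac_one_eq_zero_iff:
  assumes p: "prime_ideal p"
  shows "frac scale p n 1 = frac scale p 0 1 \<longleftrightarrow> (\<exists>v. v \<notin> p \<and> v *s n = 0)"
proof
  have "1 \<notin> p"
    using p ideal_eq_UNIV_if_one by (auto simp: prime_ideal_def)
  then have "(n, 1) \<in> frac scale p n 1"
    by (auto simp: frac_def intro: exI[of _ 1])
  moreover assume "frac scale p n 1 = frac scale p 0 1"
  ultimately have "(n, 1) \<in> frac scale p 0 1"
    by simp
  then show "\<exists>v. v \<notin> p \<and> v *s n = 0"
    by (auto simp: frac_def)
next
  assume "\<exists>v. v \<notin> p \<and> v *s n = 0"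
  then obtain v where v: "v \<notin> p" "v *s n = 0" by blast
  have not_in_p: "x * y \<notin> p" if "x \<notin> p" "y \<notin> p" for x y
    using p that by (auto simp: prime_ideal_def)
  have killed_by_v: "(v * w) *s (u *s n) = 0" for w u
    by (metis v(2) mult.commute scale_scale scale_zero_right)
  have "(\<exists>w. w \<notin> p \<and> w *s (u *s n - m) = 0) \<longleftrightarrow> (\<exists>w. w \<notin> p \<and> w *s m = 0)" for u m
  proof
    assume "\<exists>w. w \<notin> p \<and> w *s (u *s n - m) = 0"
    then obtain w where "w \<notin> p" "w *s (u *s n - m) = 0" by blast
    then have "(v * w) *s (u *s n - m) = 0"
      by (metis mult.commute scale_scale scale_zero_right)
    then show "\<exists>w. w \<notin> p \<and> w *s m = 0"
      using killed_by_v not_in_p[OF v(1) \<open>w \<notin> p\<close>] by (auto simp: scale_right_diff_distrib)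
  next
    assume "\<exists>w. w \<notin> p \<and> w *s m = 0"
    then obtain w where "w \<notin> p" "w *s m = 0" by blast
    then have "(v * w) *s (u *s n - m) = 0"
      using killed_by_v
      by (simp add: scale_right_diff_distrib) (metis mult.commute scale_scale scale_zero_right)
    then show "\<exists>w. w \<notin> p \<and> w *s (u *s n - m) = 0"
      using not_in_p[OF v(1) \<open>w \<notin> p\<close>] by blast
  qed
  then show "frac scale p n 1 = frac scale p 0 1"
    by (auto simp: frac_def)
qed

lemma Supp_compl_V_mod:
  assumes "faithful scale" and "primeful scale" and "Spec_mod scale \<noteq> {}"
  shows "Supp scale (Spec_mod scale - V_mod scale K) = {p. prime_ideal p \<and> \<not> colon scale K \<subseteq> p}"
proof (intro equalityI subsetI)
  fix p assume "p \<in> Supp scale (Spec_mod scale - V_mod scale K)"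
  then show "p \<in> {p. prime_ideal p \<and> \<not> colon scale K \<subseteq> p}"
    by (auto simp: Supp_def Spec_mod_def V_mod_def prime_ideal_colon)
next
  fix p assume p: "p \<in> {p. prime_ideal p \<and> \<not> colon scale K \<subseteq> p}"
  obtain P0 where "prime_submodule scale P0"
    using assms(3) by (auto simp: Spec_mod_def)
  then obtain x where "x \<notin> P0" "0 \<in> P0"
    by (auto simp: prime_submodule_def subspace_0)
  then have "(UNIV :: 'b set) \<noteq> {0}"
    by (metis UNIV_I singletonD)
  then have "\<exists>P\<in>Spec_mod scale. colon scale P = p"
    using assms(1,2) p by (auto simp: primeful_def faithful_def prime_ideal_def is_ideal_def)
  then show "p \<in> Supp scale (Spec_mod scale - V_mod scale K)"
    using p by (auto simp: Supp_def V_mod_def)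
qed

end

lemma ker_eps_eq: "ker_eps s t U = {n. \<forall>p\<in>Supp s U. frac t p n 1 = frac t p 0 1}"
  by (auto simp: ker_eps_def eps_def fun_eq_iff)

theorem proposition3p8:
  fixes sM :: "'r::comm_ring_1 \<Rightarrow> 'm::ab_group_add \<Rightarrow> 'm"
    and sN :: "'r \<Rightarrow> 'n::ab_group_add \<Rightarrow> 'n"
    and K :: "'m set"
  assumes "noetherian_ring TYPE('r)"
    and "module sM" and "faithful sM" and "primeful sM" and "Spec_mod sM \<noteq> {}"
    and "module sN"
    and "module.subspace sM K"
  shows "Gamma sN (colon sM K) UNIV = ker_eps sM sN (Spec_mod sM - V_mod sM K)
     \<and> torsion sN (colon sM K) (ker_eps sM sN (Spec_mod sM - V_mod sM K))"
proof -
  interpret M: module sM by fact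
  interpret N: module sN by fact
  define I where "I = colon sM K"
  have I: "is_ideal I"
    unfolding I_def by (rule M.is_ideal_colon) fact
  have "n \<in> ker_eps sM sN (Spec_mod sM - V_mod sM K) \<longleftrightarrow>
      (\<forall>p. prime_ideal p \<and> \<not> I \<subseteq> p \<longrightarrow> (\<exists>v. v \<notin> p \<and> sN v n = 0))" for n
    unfolding ker_eps_eq M.Supp_compl_V_mod[OF assms(3-5)] I_def
    using N.frac_one_eq_zero_iff by blast
  also have "\<dots> n \<longleftrightarrow> (\<forall>p. prime_ideal p \<and> {r. sN r n = 0} \<subseteq> p \<longrightarrow> I \<subseteq> p)" for n
    by blast
  also have "\<dots> n \<longleftrightarrow> (\<forall>a\<in>I. \<exists>m. a ^ m \<in> {r. sN r n = 0})" for n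
    by (rule subset_radical_iff_prime_ideals[OF N.is_ideal_annihilator, symmetric])
  also have "\<dots> n \<longleftrightarrow> n \<in> Gamma sN I UNIV" for n
    using noetherian_ideal_pow_subset_iff[OF assms(1) I N.is_ideal_annihilator]
    by (simp add: Gamma_def subset_eq)
  finally have "Gamma sN I UNIV = ker_eps sM sN (Spec_mod sM - V_mod sM K)"
    by (intro set_eqI) (rule sym)
  moreover have "torsion sN I (Gamma sN I UNIV)"
    by (auto simp: torsion_def Gamma_def)
  ultimately show ?thesis
    unfolding I_def by simp
qed

end
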